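(* Let $G$ be a finite simple graph with $n$ vertices and minimum degree $\delta$ satisfying $1{,}000 \le \delta \le 24{,}000$. Then $$\gamma_s(G) \le \frac{\sqrt{\ln(\delta+1)\,(11.8 - 0.48\ln\delta)} + 0.25}{\sqrt{\delta+1}}\, n.$$
   Context: For a vertex $v$ of $G$, $N[v]$ denotes the closed neighbourhood of $v$ (i.e. $v$ together with its neighbours). A signed domination function of $G$ is a function $f: V(G) \to \{-1, 1\}$ such that $\sum_{x \in N[v]} f(x) \ge 1$ for every vertex $v \in V(G)$. The weight of $f$ is $f(V(G)) = \sum_{v \in V(G)} f(v)$. The signed domination number $\gamma_s(G)$ is the minimum weight of a signed domination function of $G$. *)

theory Defs
  imports Complex_Main
begin

definition simple_graph :: "'a set \<Rightarrow> ('a \<Rightarrow> 'a \<Rightarrow> bool) \<Rightarrow> bool" where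
  "simple_graph V E \<longleftrightarrow> finite V \<and> (\<forall>u v. E u v \<longrightarrow> u \<in> V \<and> v \<in> V)
     \<and> (\<forall>u v. E u v \<longrightarrow> E v u) \<and> (\<forall>v. \<not> E v v)"

definition neighbours :: "'a set \<Rightarrow> ('a \<Rightarrow> 'a \<Rightarrow> bool) \<Rightarrow> 'a \<Rightarrow> 'a set" where
  "neighbours V E v = {u \<in> V. E v u}"

definition closed_nbhd :: "'a set \<Rightarrow> ('a \<Rightarrow> 'a \<Rightarrow> bool) \<Rightarrow> 'a \<Rightarrow> 'a set" where
  "closed_nbhd V E v = insert v (neighbours V E v)"

definition degree :: "'a set \<Rightarrow> ('a \<Rightarrow> 'a \<Rightarrow> bool) \<Rightarrow> 'a \<Rightarrow> nat" where
  "degree V E v = card (neighbours V E v)"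

definition min_degree :: "'a set \<Rightarrow> ('a \<Rightarrow> 'a \<Rightarrow> bool) \<Rightarrow> nat" where
  "min_degree V E = Min (degree V E ` V)"

definition signed_dom_fun :: "'a set \<Rightarrow> ('a \<Rightarrow> 'a \<Rightarrow> bool) \<Rightarrow> ('a \<Rightarrow> int) \<Rightarrow> bool" where
  "signed_dom_fun V E f \<longleftrightarrow> (\<forall>v\<in>V. f v \<in> {-1, 1})
     \<and> (\<forall>v\<in>V. (\<Sum>x\<in>closed_nbhd V E v. f x) \<ge> 1)"

definition signed_dom_number :: "'a set \<Rightarrow> ('a \<Rightarrow> 'a \<Rightarrow> bool) \<Rightarrow> int" where
  "signed_dom_number V E = Min {(\<Sum>v\<in>V. f v) | f. signed_dom_fun V E f}"

end

theory Submission
  imports Defs "HOL-Probability.Probability"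
begin

text \<open>Choose a random vertex set \<open>P\<close>, each vertex independently with probability \<open>(1 + \<epsilon>)/2\<close>.
By Hoeffding's inequality a vertex \<open>v\<close> is deficient, i.e. at most half of \<open>N[v]\<close> lies in \<open>P\<close>,
with probability at most \<open>exp (-\<epsilon>\<^sup>2 |N[v]| / 2)\<close>. Adding \<open>N[v]\<close> to \<open>P\<close> for every deficient
\<open>v\<close> gives a set \<open>Q\<close> containing a strict majority of every closed neighbourhood, so the
\<open>\<plusminus>1\<close>-indicator of \<open>Q\<close> is a signed domination function of weight \<open>2|Q| - n\<close>. For
\<open>\<epsilon> = 2 \<surd>(ln (\<delta>+1)/(\<delta>+1))\<close> the expected size of \<open>Q\<close> is at most \<open>(1 + \<epsilon>)n/2 + n/(\<delta>+1)\<close>,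
whence \<open>\<gamma>\<^sub>s(G) \<le> (\<epsilon> + 2/(\<delta>+1)) n\<close>; in the range \<open>1000 \<le> \<delta> \<le> 24000\<close> this coefficient is
below the stated one.\<close>

definition deficient :: "'a set \<Rightarrow> ('a \<Rightarrow> 'a set) \<Rightarrow> 'a set \<Rightarrow> 'a set" where
  "deficient V N P = {v \<in> V. 2 * card (N v \<inter> P) \<le> card (N v)}"

lemma prob_Pi_bernoulli_card_le_half:
  fixes \<epsilon> :: real
  assumes V: "finite V" and A: "A \<subseteq> V" "A \<noteq> {}" and \<epsilon>: "0 \<le> \<epsilon>" "\<epsilon> \<le> 1"
  shows "measure_pmf.prob (Pi_pmf V False (\<lambda>_. bernoulli_pmf ((1 + \<epsilon>) / 2)))
           {f. 2 * card {x\<in>A. f x} \<le> card A} \<le> exp (- (\<epsilon>\<^sup>2 * card A / 2))"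
proof -
  define m where "m = card A"
  define q where "q = (1 + \<epsilon>) / 2"
  have finA: "finite A" using V A(1) by (rule finite_subset[rotated])
  have m: "0 < m" unfolding m_def using finA A(2) by (simp add: card_gt_0_iff)
  have q: "q \<in> {0..1}" unfolding q_def using \<epsilon> by auto
  interpret binomial_distribution m q by unfold_locales (rule q)
  have "measure_pmf.prob (Pi_pmf V False (\<lambda>_. bernoulli_pmf q)) {f. 2 * card {x\<in>A. f x} \<le> m}
      = measure_pmf.prob (Pi_pmf A False (\<lambda>_. bernoulli_pmf q)) {f. 2 * card {x\<in>A. f x} \<le> m}"
    by (simp add: Pi_pmf_subset[OF V A(1)] measure_map_pmf vimage_def cong: conj_cong)
  also have "\<dots> = measure_pmf.prob (binomial_pmf m q) {k. 2 * k \<le> m}"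
    by (simp add: binomial_pmf_altdef'[OF finA m_def[symmetric] q, of False]
        measure_map_pmf vimage_def)
  also have "{k. 2 * k \<le> m} = {k. real k \<le> real m * q - real m * \<epsilon> / 2}"
    by (auto simp: q_def field_simps)
  also have "measure_pmf.prob (binomial_pmf m q) \<dots> \<le> exp (-2 * (real m * \<epsilon> / 2)\<^sup>2 / real m)"
    by (rule prob_le) (use m \<epsilon> in auto)
  also have "-2 * (real m * \<epsilon> / 2)\<^sup>2 / real m = - (\<epsilon>\<^sup>2 * m / 2)"
    using m by (simp add: power2_eq_square field_simps)
  finally show ?thesis unfolding m_def q_def .
qed

lemma exists_le_expectation_pmf:
  fixes g :: "'b \<Rightarrow> real"
  assumes "finite (set_pmf M)"
  obtains x where "x \<in> set_pmf M" "g x \<le> measure_pmf.expectation M g"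
proof -
  obtain x where x: "x \<in> set_pmf M" "g x = Min (g ` set_pmf M)"
    using Min_in[of "g ` set_pmf M"] assms set_pmf_not_empty by fastforce
  have "g x \<le> measure_pmf.expectation M g"
    by (rule measure_pmf.integral_ge_const)
       (use assms x in \<open>auto simp: integrable_measure_pmf_finite AE_measure_pmf_iff\<close>)
  with x(1) show thesis by (rule that)
qed

lemma expectation_card_deficient_le:
  fixes \<epsilon> :: real
  assumes V: "finite V" and NV: "\<And>v. v \<in> V \<Longrightarrow> N v \<subseteq> V"
    and N: "\<And>v. v \<in> V \<Longrightarrow> N v \<noteq> {}" and \<epsilon>: "0 \<le> \<epsilon>" "\<epsilon> \<le> 1"
  shows "measure_pmf.expectation (Pi_pmf V False (\<lambda>_. bernoulli_pmf ((1 + \<epsilon>) / 2)))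
           (\<lambda>f. card {u\<in>V. f u} + (\<Sum>v\<in>deficient V N {u\<in>V. f u}. real (card (N v))))
    \<le> (1 + \<epsilon>) / 2 * card V + (\<Sum>v\<in>V. card (N v) * exp (- (\<epsilon>\<^sup>2 * card (N v) / 2)))"
proof -
  define \<Omega> where "\<Omega> = Pi_pmf V False (\<lambda>_. bernoulli_pmf ((1 + \<epsilon>) / 2))"
  define bad where "bad v = {f. 2 * card {x\<in>N v. f x} \<le> card (N v)}" for v
  have fin: "finite (set_pmf \<Omega>)"
    unfolding \<Omega>_def by (rule finite_subset[OF set_Pi_pmf_subset'[OF V]]) (auto intro: finite_PiE_dflt V)
  have indicator_sum: "card {u\<in>V. f u} + (\<Sum>v\<in>deficient V N {u\<in>V. f u}. real (card (N v)))
      = (\<Sum>u\<in>V. indicator {f. f u} f) + (\<Sum>v\<in>V. real (card (N v)) * indicator (bad v) f)" for f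
  proof -
    have "{x\<in>N v. f x} = N v \<inter> {u\<in>V. f u}" if "v \<in> V" for v using NV[OF that] by auto
    then have "(\<Sum>v\<in>V. real (card (N v)) * indicator (bad v) f)
        = (\<Sum>v\<in>V. if v \<in> deficient V N {u\<in>V. f u} then real (card (N v)) else 0)"
      by (intro sum.cong) (auto simp: indicator_def bad_def deficient_def)
    also have "\<dots> = (\<Sum>v\<in>deficient V N {u\<in>V. f u}. real (card (N v)))"
      by (simp add: sum.If_cases V deficient_def Int_def)
    finally show ?thesis by (simp add: indicator_def sum.If_cases V Int_def conj_commute)
  qed
  have prob_vertex: "measure_pmf.prob \<Omega> {f. f u} = (1 + \<epsilon>) / 2" if "u \<in> V" for u
  proof -
    have "measure_pmf.prob \<Omega> {f. f u} = measure_pmf.prob (map_pmf (\<lambda>f. f u) \<Omega>) {True}"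
      by (simp add: measure_map_pmf vimage_def)
    also have "map_pmf (\<lambda>f. f u) \<Omega> = bernoulli_pmf ((1 + \<epsilon>) / 2)"
      unfolding \<Omega>_def using Pi_pmf_component[OF V, of u False] that by simp
    also have "measure_pmf.prob (bernoulli_pmf ((1 + \<epsilon>) / 2)) {True} = (1 + \<epsilon>) / 2"
      using \<epsilon> by (simp add: measure_pmf_single)
    finally show ?thesis .
  qed
  have prob_bad: "measure_pmf.prob \<Omega> (bad v) \<le> exp (- (\<epsilon>\<^sup>2 * card (N v) / 2))" if "v \<in> V" for v
    unfolding \<Omega>_def bad_def by (rule prob_Pi_bernoulli_card_le_half[OF V NV[OF that] N[OF that] \<epsilon>])
  have "measure_pmf.expectation \<Omega>
          (\<lambda>f. card {u\<in>V. f u} + (\<Sum>v\<in>deficient V N {u\<in>V. f u}. real (card (N v))))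
      = (\<Sum>u\<in>V. measure_pmf.prob \<Omega> {f. f u}) + (\<Sum>v\<in>V. card (N v) * measure_pmf.prob \<Omega> (bad v))"
    unfolding indicator_sum
    by (simp add: integrable_measure_pmf_finite[OF fin] Bochner_Integration.integral_add
                  Bochner_Integration.integral_sum)
  also have "\<dots> \<le> (\<Sum>u\<in>V. (1 + \<epsilon>) / 2) + (\<Sum>v\<in>V. card (N v) * exp (- (\<epsilon>\<^sup>2 * card (N v) / 2)))"
    by (intro add_mono sum_mono mult_left_mono) (auto simp: prob_vertex prob_bad)
  finally show ?thesis by (simp add: \<Omega>_def mult.commute)
qed

lemma exists_subset_card_deficient_le:
  fixes \<epsilon> :: real
  assumes V: "finite V" and NV: "\<And>v. v \<in> V \<Longrightarrow> N v \<subseteq> V"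
    and N: "\<And>v. v \<in> V \<Longrightarrow> N v \<noteq> {}" and \<epsilon>: "0 \<le> \<epsilon>" "\<epsilon> \<le> 1"
  obtains P where "P \<subseteq> V"
    "card P + (\<Sum>v\<in>deficient V N P. real (card (N v)))
       \<le> (1 + \<epsilon>) / 2 * card V + (\<Sum>v\<in>V. card (N v) * exp (- (\<epsilon>\<^sup>2 * card (N v) / 2)))"
proof -
  let ?\<Omega> = "Pi_pmf V False (\<lambda>_. bernoulli_pmf ((1 + \<epsilon>) / 2))"
  have "finite (set_pmf ?\<Omega>)"
    by (rule finite_subset[OF set_Pi_pmf_subset'[OF V]]) (auto intro: finite_PiE_dflt V)
  then obtain f where "card {u\<in>V. f u} + (\<Sum>v\<in>deficient V N {u\<in>V. f u}. real (card (N v)))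
      \<le> measure_pmf.expectation ?\<Omega>
           (\<lambda>f. card {u\<in>V. f u} + (\<Sum>v\<in>deficient V N {u\<in>V. f u}. real (card (N v))))"
    by (rule exists_le_expectation_pmf)
  also have "\<dots> \<le> (1 + \<epsilon>) / 2 * card V + (\<Sum>v\<in>V. card (N v) * exp (- (\<epsilon>\<^sup>2 * card (N v) / 2)))"
    by (rule expectation_card_deficient_le[OF V NV N \<epsilon>])
  finally show thesis by (intro that[of "{u\<in>V. f u}"]) auto
qed

lemma closed_nbhd_subset: "v \<in> V \<Longrightarrow> closed_nbhd V E v \<subseteq> V"
  by (auto simp: closed_nbhd_def neighbours_def)

lemma card_closed_nbhd:
  assumes "simple_graph V E"
  shows "card (closed_nbhd V E v) = Defs.degree V E v + 1"
proof -
  have "v \<notin> neighbours V E v" "finite (neighbours V E v)"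
    using assms by (auto simp: simple_graph_def neighbours_def)
  then show ?thesis by (simp add: closed_nbhd_def Defs.degree_def)
qed

lemma min_degree_le_degree: "finite V \<Longrightarrow> v \<in> V \<Longrightarrow> min_degree V E \<le> Defs.degree V E v"
  by (simp add: min_degree_def)

lemma signed_dom_number_le:
  assumes V: "finite V" and f: "signed_dom_fun V E f"
  shows "signed_dom_number V E \<le> (\<Sum>v\<in>V. f v)"
proof -
  have "{(\<Sum>v\<in>V. f v) | f. signed_dom_fun V E f} \<subseteq> {- int (card V)..int (card V)}"
  proof clarify
    fix g assume g: "signed_dom_fun V E g"
    have "\<bar>\<Sum>v\<in>V. g v\<bar> \<le> (\<Sum>v\<in>V. \<bar>g v\<bar>)" by (rule sum_abs)
    also have "\<dots> = (\<Sum>v\<in>V. 1)" using g by (intro sum.cong) (auto simp: signed_dom_fun_def)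
    finally show "(\<Sum>v\<in>V. g v) \<in> {- int (card V)..int (card V)}" by auto
  qed
  then have "finite {(\<Sum>v\<in>V. f v) | f. signed_dom_fun V E f}" by (rule finite_subset) simp
  then show ?thesis unfolding signed_dom_number_def by (rule Min_le) (use f in blast)
qed

lemma sum_sign_indicator:
  assumes "finite S"
  shows "(\<Sum>x\<in>S. if x \<in> Q then 1 else -1 :: int) = 2 * int (card (S \<inter> Q)) - int (card S)"
proof -
  have "(\<Sum>x\<in>S. if x \<in> Q then 1 else -1 :: int) = int (card (S \<inter> Q)) - int (card (S - Q))"
    using assms by (simp add: sum.If_cases Int_def Diff_eq)
  moreover have "card S = card (S \<inter> Q) + card (S - Q)"
    using assms by (metis card_Int_Diff)
  ultimately show ?thesis by simp
qed

lemma signed_dom_fun_sign_indicator: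
  assumes V: "finite V"
    and majority: "\<And>v. v \<in> V \<Longrightarrow> card (closed_nbhd V E v) < 2 * card (closed_nbhd V E v \<inter> Q)"
  shows "signed_dom_fun V E (\<lambda>x. if x \<in> Q then 1 else -1)"
  unfolding signed_dom_fun_def
proof (intro conjI ballI)
  fix v assume v: "v \<in> V"
  have "finite (closed_nbhd V E v)" using V closed_nbhd_subset[OF v] by (rule finite_subset[rotated])
  then show "1 \<le> (\<Sum>x\<in>closed_nbhd V E v. if x \<in> Q then 1 else -1 :: int)"
    using majority[OF v] by (simp add: sum_sign_indicator)
qed simp

lemma majority_Un_deficient:
  assumes "v \<in> V" "finite (N v)" "N v \<noteq> {}"
  shows "card (N v) < 2 * card (N v \<inter> (P \<union> (\<Union>w\<in>deficient V N P. N w)))"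
proof (cases "v \<in> deficient V N P")
  case True
  then have "N v \<inter> (P \<union> (\<Union>w\<in>deficient V N P. N w)) = N v" by auto
  with assms(2,3) show ?thesis by (simp add: card_gt_0_iff)
next
  case False
  then have "card (N v) < 2 * card (N v \<inter> P)" using assms(1) by (simp add: deficient_def)
  moreover have "card (N v \<inter> P) \<le> card (N v \<inter> (P \<union> (\<Union>w\<in>deficient V N P. N w)))"
    using assms(2) by (intro card_mono) auto
  ultimately show ?thesis by linarith
qed

lemma signed_dom_number_le_deficient:
  assumes G: "simple_graph V E" and P: "P \<subseteq> V"
  defines "N \<equiv> closed_nbhd V E"
  shows "signed_dom_number V E
    \<le> 2 * (card P + (\<Sum>v\<in>deficient V N P. real (card (N v)))) - card V"
proof -
  have V: "finite V" using G by (simp add: simple_graph_def)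
  have NV: "N v \<subseteq> V" if "v \<in> V" for v unfolding N_def using that by (rule closed_nbhd_subset)
  define Q where "Q = P \<union> (\<Union>v\<in>deficient V N P. N v)"
  have QV: "Q \<subseteq> V" unfolding Q_def deficient_def using P NV by auto
  have "card Q \<le> card P + (\<Sum>v\<in>deficient V N P. card (N v))"
  proof -
    have "card Q \<le> card P + card (\<Union>v\<in>deficient V N P. N v)" unfolding Q_def by (rule card_Un_le)
    also have "card (\<Union>v\<in>deficient V N P. N v) \<le> (\<Sum>v\<in>deficient V N P. card (N v))"
      by (rule card_UN_le) (simp add: deficient_def V)
    finally show ?thesis by simp
  qed
  then have "card Q \<le> card P + (\<Sum>v\<in>deficient V N P. real (card (N v)))"
    by (simp flip: of_nat_sum)
  moreover have "real_of_int (signed_dom_number V E) \<le> 2 * real (card Q) - real (card V)"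
  proof -
    have "card (N v) < 2 * card (N v \<inter> Q)" if "v \<in> V" for v
      unfolding Q_def using that V NV[OF that]
      by (intro majority_Un_deficient) (auto simp: N_def closed_nbhd_def intro: finite_subset)
    then have "signed_dom_number V E \<le> (\<Sum>x\<in>V. if x \<in> Q then 1 else -1)"
      unfolding N_def by (intro signed_dom_number_le V signed_dom_fun_sign_indicator)
    also have "\<dots> = 2 * int (card Q) - int (card V)"
      using QV by (simp add: sum_sign_indicator[OF V] Int_absorb1)
    finally show ?thesis by (simp add: of_int_le_iff[symmetric])
  qed
  ultimately show ?thesis by argo
qed

theorem signed_dom_number_le_exp_sum:
  fixes \<epsilon> :: real
  assumes G: "simple_graph V E" and \<epsilon>: "0 \<le> \<epsilon>" "\<epsilon> \<le> 1"
  shows "signed_dom_number V E \<le> \<epsilon> * card V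
    + 2 * (\<Sum>v\<in>V. (Defs.degree V E v + 1) * exp (- (\<epsilon>\<^sup>2 * (Defs.degree V E v + 1) / 2)))"
proof -
  define N where "N = closed_nbhd V E"
  have V: "finite V" using G by (simp add: simple_graph_def)
  have cardN: "card (N v) = Defs.degree V E v + 1" for v unfolding N_def using G by (rule card_closed_nbhd)
  have NV: "N v \<subseteq> V" if "v \<in> V" for v unfolding N_def using that by (rule closed_nbhd_subset)
  have N: "N v \<noteq> {}" for v by (simp add: N_def closed_nbhd_def)
  obtain P where P: "P \<subseteq> V" and
    "card P + (\<Sum>v\<in>deficient V N P. real (card (N v)))
       \<le> (1 + \<epsilon>) / 2 * card V + (\<Sum>v\<in>V. card (N v) * exp (- (\<epsilon>\<^sup>2 * card (N v) / 2)))"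
    by (rule exists_subset_card_deficient_le[OF V NV N \<epsilon>])
  moreover have "signed_dom_number V E
      \<le> 2 * (card P + (\<Sum>v\<in>deficient V N P. real (card (N v)))) - card V"
    unfolding N_def by (rule signed_dom_number_le_deficient[OF G P])
  moreover have "(1 + \<epsilon>) / 2 * card V = (card V + \<epsilon> * card V) / 2" by (simp add: field_simps)
  ultimately show ?thesis unfolding cardN[symmetric] by argo
qed

lemma mult_exp_neg_antimono:
  fixes a b :: real
  assumes "1 \<le> a" "a \<le> b"
  shows "b * exp (- b) \<le> a * exp (- a)"
proof -
  have "(b - a) * 1 \<le> (b - a) * a" using assms by (intro mult_left_mono) auto
  then have "b / a \<le> 1 + (b - a)" using assms by (simp add: field_simps)
  also have "\<dots> \<le> exp (b - a)" by (rule exp_ge_add_one_self)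
  finally have "b \<le> a * exp (b - a)" using assms by (simp add: field_simps)
  then have "b * exp (- b) \<le> a * exp (b - a) * exp (- b)" by (simp add: mult_right_mono)
  also have "\<dots> = a * exp (- a)" by (simp add: mult.assoc exp_add[symmetric])
  finally show ?thesis .
qed

lemma mult_exp_neg_ln_le_inverse:
  fixes c m :: real
  assumes c: "0 < c" "1 \<le> 2 * ln c" and m: "c \<le> m"
  shows "m * exp (- (2 * ln c * m / c)) \<le> 1 / c"
proof -
  define L where "L = 2 * ln c"
  define x where "x = L * m / c"
  have L: "1 \<le> L" using c by (simp add: L_def)
  have "L * c \<le> L * m" using L m by (intro mult_left_mono) auto
  then have "L \<le> x" unfolding x_def using c by (simp add: le_divide_eq)
  have "c / L * x = m" unfolding x_def using c L by simp
  have exp_L: "exp (- L) = 1 / (c * c)"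
  proof -
    have "L = ln (c * c)" using c by (simp add: L_def ln_mult)
    then show ?thesis using c by (simp add: exp_minus inverse_eq_divide)
  qed
  have "m * exp (- x) = c / L * (x * exp (- x))" using \<open>c / L * x = m\<close> by (metis mult.assoc)
  also have "\<dots> \<le> c / L * (L * exp (- L))"
    using c L \<open>L \<le> x\<close> by (intro mult_left_mono mult_exp_neg_antimono) auto
  also have "\<dots> = c * exp (- L)" using L by simp
  also have "\<dots> = 1 / c" using c by (simp add: exp_L)
  finally show ?thesis by (simp add: x_def L_def)
qed

theorem signed_dom_number_le_sqrt_ln:
  assumes G: "simple_graph V E"
  defines "c \<equiv> real (min_degree V E) + 1"
  assumes c: "1 \<le> min_degree V E" "4 * ln c \<le> c"
  shows "signed_dom_number V E \<le> (2 * sqrt (ln c / c) + 2 / c) * card V"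
proof -
  define \<epsilon> where "\<epsilon> = 2 * sqrt (ln c / c)"
  have c2: "2 \<le> c" using c(1) by (simp add: c_def)
  have ln_c: "1 \<le> 2 * ln c"
    using ln2_ge_two_thirds ln_mono[of 2 c] c2 by linarith
  have \<epsilon>2: "\<epsilon>\<^sup>2 = 4 * ln c / c" unfolding \<epsilon>_def using ln_c c2 by (simp add: power_mult_distrib)
  have \<epsilon>: "0 \<le> \<epsilon>" "\<epsilon> \<le> 1"
  proof -
    show "0 \<le> \<epsilon>" using c2 ln_c by (simp add: \<epsilon>_def)
    have "\<epsilon>\<^sup>2 \<le> 1\<^sup>2" using c(2) c2 by (simp add: \<epsilon>2)
    then show "\<epsilon> \<le> 1" by (rule power2_le_imp_le) simp
  qed
  have V: "finite V" using G by (simp add: simple_graph_def)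
  have term_le: "(Defs.degree V E v + 1) * exp (- (\<epsilon>\<^sup>2 * (Defs.degree V E v + 1) / 2)) \<le> 1 / c"
    if "v \<in> V" for v
  proof -
    define m where "m = real (Defs.degree V E v + 1)"
    have "c \<le> m" using min_degree_le_degree[OF V that, of E] by (simp add: c_def m_def)
    have "m * exp (- (\<epsilon>\<^sup>2 * m / 2)) = m * exp (- (2 * ln c * m / c))"
      by (simp add: \<epsilon>2 algebra_simps)
    also have "\<dots> \<le> 1 / c"
      by (rule mult_exp_neg_ln_le_inverse) (use c2 ln_c \<open>c \<le> m\<close> in auto)
    finally show ?thesis by (simp add: m_def)
  qed
  have "signed_dom_number V E \<le> \<epsilon> * card V
      + 2 * (\<Sum>v\<in>V. (Defs.degree V E v + 1) * exp (- (\<epsilon>\<^sup>2 * (Defs.degree V E v + 1) / 2)))"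
    by (rule signed_dom_number_le_exp_sum[OF G \<epsilon>])
  also have "\<dots> \<le> \<epsilon> * card V + 2 * (\<Sum>v\<in>V. 1 / c)"
    using term_le by (intro add_left_mono mult_left_mono sum_mono) auto
  finally show ?thesis by (simp add: \<epsilon>_def algebra_simps)
qed

lemma four_ln_le_self:
  fixes c :: real
  assumes "64 \<le> c"
  shows "4 * ln c \<le> c"
proof -
  define s where "s = sqrt c"
  have s: "8 \<le> s" "s * s = c" using assms by (auto simp: s_def real_le_rsqrt)
  have "ln c = 2 * ln s" using assms by (simp add: s_def ln_sqrt)
  also have "\<dots> \<le> 2 * (s - 1)" using ln_le_minus_one[of s] s by simp
  finally have "4 * ln c \<le> 8 * s" by simp
  also have "\<dots> \<le> s * s" using s by (intro mult_right_mono) auto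
  finally show ?thesis using s by simp
qed

lemma sqrt_ln_coefficient_le:
  fixes d :: real
  assumes d: "1000 \<le> d" "d \<le> 24000"
  shows "2 * sqrt (ln (d + 1) / (d + 1)) + 2 / (d + 1)
    \<le> (sqrt (ln (d + 1) * (11.8 - 0.48 * ln d)) + 0.25) / sqrt (d + 1)"
proof -
  define L where "L = ln (d + 1)"
  define s where "s = sqrt (d + 1)"
  have s: "8 \<le> s" "s * s = d + 1" using d by (auto simp: s_def real_le_rsqrt)
  have L: "0 \<le> L" using d by (simp add: L_def)
  have "ln d \<le> ln ((2::real) ^ 15)" using d by (intro ln_mono) auto
  also have "\<dots> = 15 * ln 2" using ln_realpow[of "2::real" 15] by simp
  also have "\<dots> < 15" using ln_2_less_1 by simp
  finally have "sqrt (L * 4) \<le> sqrt (L * (11.8 - 0.48 * ln d))"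
    using L by (intro real_sqrt_le_mono mult_left_mono) auto
  then have "2 * sqrt L \<le> sqrt (L * (11.8 - 0.48 * ln d))" by (simp add: real_sqrt_mult)
  moreover have "2 / s \<le> 0.25" using s by (simp add: divide_simps)
  ultimately have "2 * sqrt L + 2 / s \<le> sqrt (L * (11.8 - 0.48 * ln d)) + 0.25" by linarith
  then have "(2 * sqrt L + 2 / s) / s \<le> (sqrt (L * (11.8 - 0.48 * ln d)) + 0.25) / s"
    using s by (intro divide_right_mono) auto
  moreover have "2 * sqrt (L / (d + 1)) + 2 / (d + 1) = (2 * sqrt L + 2 / s) / s"
    using s by (simp add: s_def real_sqrt_divide add_divide_distrib)
  ultimately show ?thesis unfolding L_def[symmetric] s_def[symmetric] by simp
qed

theorem corollary2:
  fixes V :: "'a set" and E :: "'a \<Rightarrow> 'a \<Rightarrow> bool"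
  assumes "simple_graph V E" and "V \<noteq> {}"
    and "1000 \<le> min_degree V E" and "min_degree V E \<le> 24000"
  shows "real_of_int (signed_dom_number V E)
    \<le> (sqrt (ln (real (min_degree V E) + 1) * (11.8 - 0.48 * ln (real (min_degree V E))))
         + 0.25) / sqrt (real (min_degree V E) + 1) * real (card V)"
proof -
  define d where "d = real (min_degree V E)"
  have d: "1000 \<le> d" "d \<le> 24000" using assms(3,4) by (simp_all add: d_def)
  have "4 * ln (d + 1) \<le> d + 1" using d by (intro four_ln_le_self) simp
  then have "signed_dom_number V E \<le> (2 * sqrt (ln (d + 1) / (d + 1)) + 2 / (d + 1)) * card V"
    using signed_dom_number_le_sqrt_ln[OF assms(1)] assms(3) by (simp add: d_def)
  also have "\<dots> \<le> (sqrt (ln (d + 1) * (11.8 - 0.48 * ln d)) + 0.25) / sqrt (d + 1) * card V"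
    using sqrt_ln_coefficient_le[OF d] by (rule mult_right_mono) simp
  finally show ?thesis by (simp add: d_def)
qed

end
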